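(* Let $d\ge1$, let $\Gamma\subset\mathbb{R}^d$ be open, and let $\{Q_j\}_{j\in J}$ be a finite or countably infinite family of open sets $Q_j\subset\mathbb{R}^d$ such that almost everywhere $\mathbb{1}_\Gamma\le\sum_{j\in J}\mathbb{1}_{Q_j}\le\kappa\mathbb{1}_\Gamma$ for some $\kappa\ge1$. Suppose $f\in C^\infty(\Gamma)$ satisfies $$\forall\alpha\in\mathbb{N}^d,\qquad\|\partial^\alpha f\|_{L^2(\Gamma)}\le DB^\alpha(|\alpha|!)^\mu$$ for some $D>0$, $B\in(0,\infty)^d$ and $\mu\in[0,1]$. Then for every $\varepsilon>0$ there is a subset $J_{\mathrm{gd}}=J_{\mathrm{gd}}(\varepsilon)\subset J$ such that $$\|f\|_{L^2(\Gamma)}^2\le\sum_{j\in J_{\mathrm{gd}}}\|f\|_{L^2(Q_j)}^2+\varepsilon D^2,$$ and for each $j\in J_{\mathrm{gd}}$, $$\forall\alpha\in\mathbb{N}^d,\qquad\|\partial^\alpha f\|_{L^2(Q_j)}\le\Big(\frac{2^d\kappa}{\varepsilon}\Big)^{1/2}(2B)^\alpha(|\alpha|!)^\mu\|f\|_{L^2(Q_j)}.$$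
   Context: For $B\in(0,\infty)^d$ and $\alpha\in\mathbb{N}^d$, $B^\alpha=\prod_iB_i^{\alpha_i}$ and $|\alpha|=\alpha_1+\dots+\alpha_d$; $\mathbb{N}=\{0,1,2,\dots\}$. Norms on $Q_j$ are understood on $Q_j\cap\Gamma$ (which coincides with $Q_j$ up to a null set by the covering hypothesis). *)

theory Defs
  imports "HOL-Analysis.Analysis"
begin

definition partial :: "'n::finite \<Rightarrow> (real^'n \<Rightarrow> complex) \<Rightarrow> real^'n \<Rightarrow> complex" where
  "partial i f x = frechet_derivative f (at x) (axis i 1)"

text \<open>Iterated partial derivative for a multi-index, peeling off one coordinate at a time
  (for smooth functions the order is irrelevant).\<close>
fun pd_aux :: "nat \<Rightarrow> ('n::finite \<Rightarrow> nat) \<Rightarrow> (real^'n \<Rightarrow> complex) \<Rightarrow> real^'n \<Rightarrow> complex" where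
  "pd_aux 0 \<alpha> f = f"
| "pd_aux (Suc k) \<alpha> f =
     (if \<alpha> = (\<lambda>_. 0) then f
      else (let i = (SOME i. 0 < \<alpha> i) in partial i (pd_aux k (\<alpha>(i := \<alpha> i - 1)) f)))"

definition mabs :: "('n::finite \<Rightarrow> nat) \<Rightarrow> nat" where
  "mabs \<alpha> = (\<Sum>i\<in>UNIV. \<alpha> i)"

definition pderiv_multi :: "('n::finite \<Rightarrow> nat) \<Rightarrow> (real^'n \<Rightarrow> complex) \<Rightarrow> real^'n \<Rightarrow> complex" where
  "pderiv_multi \<alpha> f = pd_aux (mabs \<alpha>) \<alpha> f"

definition smooth_on :: "(real^'n::finite) set \<Rightarrow> (real^'n \<Rightarrow> complex) \<Rightarrow> bool" where
  "smooth_on G f \<longleftrightarrow> (\<forall>\<alpha> x. x \<in> G \<longrightarrow> pderiv_multi \<alpha> f differentiable (at x))"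

definition mpow :: "real^'n::finite \<Rightarrow> ('n \<Rightarrow> nat) \<Rightarrow> real" where
  "mpow B \<alpha> = (\<Prod>i\<in>UNIV. (B $ i) ^ \<alpha> i)"

definition L2sq :: "(real^'n::finite) set \<Rightarrow> (real^'n \<Rightarrow> complex) \<Rightarrow> ennreal" where
  "L2sq S g = (\<integral>\<^sup>+ x. ennreal ((norm (g x))\<^sup>2) * indicator S x \<partial>lborel)"

end

theory Submission
  imports Defs
begin

text \<open>Call $j$ good when on $Q_j$ every derivative obeys
$\|\partial^\alpha f\|^2 \le c_\alpha \|f\|^2$ with
$c_\alpha = (2^d\kappa/\varepsilon)(2B)^{2\alpha}(|\alpha|!)^{2\mu}$. For a bad $j$ some $\alpha$
violates this, so $\|f\|^2_{Q_j} \le \sum_\alpha c_\alpha^{-1}\|\partial^\alpha f\|^2_{Q_j}$.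
Summing over the bad $j$ and using that the $Q_j$ overlap at most $\kappa$ times gives
$\sum_{j\ \mathrm{bad}} \|f\|^2_{Q_j} \le \sum_\alpha \kappa D^2 B^{2\alpha}(|\alpha|!)^{2\mu}/c_\alpha
 = 2^{-d}\varepsilon D^2 \sum_\alpha 4^{-|\alpha|} \le \varepsilon D^2$,
while the covering property gives $\|f\|^2_\Gamma \le \sum_j \|f\|^2_{Q_j}$.\<close>

lemma infsum_UNIV_eq_suminf_ennreal: "(\<Sum>\<^sub>\<infinity>n\<in>UNIV. u n) = (\<Sum>n. u n :: ennreal)"
proof -
  have "(u has_sum infsum u UNIV) UNIV"
    by (rule has_sum_infsum, rule nonneg_summable_on_complete) simp
  hence "u sums infsum u UNIV" by (rule has_sum_imp_sums)
  thus ?thesis by (simp add: sums_iff)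
qed

lemma infsum_cmult_right_ennreal: "(\<Sum>\<^sub>\<infinity>j\<in>J. c * g j) = (c::ennreal) * (\<Sum>\<^sub>\<infinity>j\<in>J. g j)"
proof -
  have "(\<Sum>\<^sub>\<infinity>j\<in>J. c * g j) = (SUP F\<in>{F. finite F \<and> F \<subseteq> J}. c * sum g F)"
    by (subst nonneg_infsum_complete) (simp_all add: sum_distrib_left)
  also have "\<dots> = c * (\<Sum>\<^sub>\<infinity>j\<in>J. g j)"
    by (subst nonneg_infsum_complete) (simp_all add: SUP_mult_left_ennreal)
  finally show ?thesis .
qed

lemma nn_integral_infsum:
  fixes u :: "'j \<Rightarrow> 'a \<Rightarrow> ennreal"
  assumes "countable J" "\<And>j. j \<in> J \<Longrightarrow> u j \<in> borel_measurable M"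
  shows "(\<integral>\<^sup>+x. (\<Sum>\<^sub>\<infinity>j\<in>J. u j x) \<partial>M) = (\<Sum>\<^sub>\<infinity>j\<in>J. \<integral>\<^sup>+x. u j x \<partial>M)"
proof (cases "finite J")
  case True
  thus ?thesis using assms(2) by (simp add: nn_integral_sum)
next
  case False
  define g where "g = from_nat_into J"
  have g: "bij_betw g UNIV J"
    unfolding g_def using bij_betw_from_nat_into[OF assms(1) False] .
  hence gJ: "g n \<in> J" for n by (auto simp: bij_betw_def)
  have reindex: "(\<Sum>\<^sub>\<infinity>j\<in>J. v j) = (\<Sum>n. v (g n))" for v :: "'j \<Rightarrow> ennreal"
    by (simp add: infsum_reindex_bij_betw[OF g, symmetric] infsum_UNIV_eq_suminf_ennreal)
  have "(\<integral>\<^sup>+x. (\<Sum>\<^sub>\<infinity>j\<in>J. u j x) \<partial>M) = (\<integral>\<^sup>+x. (\<Sum>n. u (g n) x) \<partial>M)"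
    by (simp add: reindex)
  also have "\<dots> = (\<Sum>n. \<integral>\<^sup>+x. u (g n) x \<partial>M)"
    using assms(2) gJ by (intro nn_integral_suminf) auto
  also have "\<dots> = (\<Sum>\<^sub>\<infinity>j\<in>J. \<integral>\<^sup>+x. u j x \<partial>M)"
    by (simp add: reindex)
  finally show ?thesis .
qed

lemma nn_integral_cover_bounds:
  fixes h :: "'a \<Rightarrow> ennreal" and Q :: "'j \<Rightarrow> 'a set"
  assumes J: "countable J" and Q: "\<And>j. j \<in> J \<Longrightarrow> Q j \<in> sets M"
    and h: "(\<lambda>x. h x * indicator \<Gamma> x) \<in> borel_measurable M"
    and cover: "AE x in M. indicator \<Gamma> x \<le> (\<Sum>\<^sub>\<infinity>j\<in>J. (indicator (Q j) x :: ennreal))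
                  \<and> (\<Sum>\<^sub>\<infinity>j\<in>J. (indicator (Q j) x :: ennreal)) \<le> ennreal \<kappa> * indicator \<Gamma> x"
  shows "(\<integral>\<^sup>+x. h x * indicator \<Gamma> x \<partial>M) \<le> (\<Sum>\<^sub>\<infinity>j\<in>J. \<integral>\<^sup>+x. h x * indicator (Q j \<inter> \<Gamma>) x \<partial>M)"
    and "(\<Sum>\<^sub>\<infinity>j\<in>J. \<integral>\<^sup>+x. h x * indicator (Q j \<inter> \<Gamma>) x \<partial>M) \<le> ennreal \<kappa> * (\<integral>\<^sup>+x. h x * indicator \<Gamma> x \<partial>M)"
proof -
  define h\<Gamma> where "h\<Gamma> x = h x * indicator \<Gamma> x" for x
  define S where "S x = (\<Sum>\<^sub>\<infinity>j\<in>J. (indicator (Q j) x :: ennreal))" for x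
  have "(\<Sum>\<^sub>\<infinity>j\<in>J. \<integral>\<^sup>+x. h x * indicator (Q j \<inter> \<Gamma>) x \<partial>M)
      = (\<Sum>\<^sub>\<infinity>j\<in>J. \<integral>\<^sup>+x. h\<Gamma> x * indicator (Q j) x \<partial>M)"
    unfolding h\<Gamma>_def by (intro infsum_cong nn_integral_cong) (simp add: indicator_inter_arith mult_ac)
  also have "\<dots> = (\<integral>\<^sup>+x. (\<Sum>\<^sub>\<infinity>j\<in>J. h\<Gamma> x * indicator (Q j) x) \<partial>M)"
    using borel_measurable_times_ennreal[OF h[folded h\<Gamma>_def] borel_measurable_indicator[OF Q]]
    by (intro nn_integral_infsum[OF J, symmetric])
  also have "\<dots> = (\<integral>\<^sup>+x. h\<Gamma> x * S x \<partial>M)"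
    unfolding S_def by (simp add: infsum_cmult_right_ennreal)
  finally have sum_eq: "(\<Sum>\<^sub>\<infinity>j\<in>J. \<integral>\<^sup>+x. h x * indicator (Q j \<inter> \<Gamma>) x \<partial>M) = (\<integral>\<^sup>+x. h\<Gamma> x * S x \<partial>M)" .
  have "AE x in M. h\<Gamma> x \<le> h\<Gamma> x * S x \<and> h\<Gamma> x * S x \<le> ennreal \<kappa> * h\<Gamma> x"
    using cover
  proof eventually_elim
    case (elim x)
    show ?case
    proof (cases "x \<in> \<Gamma>")
      case True
      with elim have "1 \<le> S x" "S x \<le> ennreal \<kappa>" by (simp_all add: S_def)
      thus ?thesis by (metis mult.commute mult.right_neutral mult_left_mono zero_le)
    qed (simp add: h\<Gamma>_def)
  qed
  hence "(\<integral>\<^sup>+x. h\<Gamma> x \<partial>M) \<le> (\<integral>\<^sup>+x. h\<Gamma> x * S x \<partial>M)"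
    and "(\<integral>\<^sup>+x. h\<Gamma> x * S x \<partial>M) \<le> (\<integral>\<^sup>+x. ennreal \<kappa> * h\<Gamma> x \<partial>M)"
    by (auto intro!: nn_integral_mono_AE elim: eventually_mono)
  moreover have "(\<integral>\<^sup>+x. ennreal \<kappa> * h\<Gamma> x \<partial>M) = ennreal \<kappa> * (\<integral>\<^sup>+x. h\<Gamma> x \<partial>M)"
    using h unfolding h\<Gamma>_def by (rule nn_integral_cmult)
  ultimately show "(\<integral>\<^sup>+x. h x * indicator \<Gamma> x \<partial>M) \<le> (\<Sum>\<^sub>\<infinity>j\<in>J. \<integral>\<^sup>+x. h x * indicator (Q j \<inter> \<Gamma>) x \<partial>M)"
    and "(\<Sum>\<^sub>\<infinity>j\<in>J. \<integral>\<^sup>+x. h x * indicator (Q j \<inter> \<Gamma>) x \<partial>M) \<le> ennreal \<kappa> * (\<integral>\<^sup>+x. h x * indicator \<Gamma> x \<partial>M)"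
    unfolding sum_eq h\<Gamma>_def by simp_all
qed

lemma le_ennreal_inverse_mult:
  assumes "c > 0" "ennreal c * x \<le> y"
  shows "x \<le> ennreal (1 / c) * y"
proof -
  have "ennreal (1 / c) * ennreal c = 1"
    using assms(1) by (simp flip: ennreal_mult)
  hence "x = ennreal (1 / c) * (ennreal c * x)"
    by (simp flip: mult.assoc)
  also have "\<dots> \<le> ennreal (1 / c) * y"
    using assms(2) by (rule mult_left_mono) simp
  finally show ?thesis .
qed

lemma infsum_bad_le:
  fixes L :: "'j \<Rightarrow> ennreal" and P :: "'a \<Rightarrow> 'j \<Rightarrow> ennreal" and c M :: "'a \<Rightarrow> real"
  assumes c_pos: "\<And>\<alpha>. c \<alpha> > 0" and M_nonneg: "\<And>\<alpha>. M \<alpha> \<ge> 0"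
    and P_sum: "\<And>\<alpha>. (\<Sum>\<^sub>\<infinity>j\<in>J. P \<alpha> j) \<le> ennreal (M \<alpha>)"
    and weights: "\<And>A. finite A \<Longrightarrow> (\<Sum>\<alpha>\<in>A. M \<alpha> / c \<alpha>) \<le> E"
  shows "(\<Sum>\<^sub>\<infinity>j\<in>{j\<in>J. \<exists>\<alpha>. ennreal (c \<alpha>) * L j < P \<alpha> j}. L j) \<le> ennreal E"
proof (rule infsum_le_finite_sums)
  let ?bad = "{j\<in>J. \<exists>\<alpha>. ennreal (c \<alpha>) * L j < P \<alpha> j}"
  show "L summable_on ?bad"
    by (rule nonneg_summable_on_complete) simp
  have "\<forall>j\<in>?bad. \<exists>\<alpha>. L j \<le> ennreal (1 / c \<alpha>) * P \<alpha> j"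
    using c_pos by (blast intro: le_ennreal_inverse_mult less_imp_le)
  from bchoice[OF this] obtain a where a: "\<forall>j\<in>?bad. L j \<le> ennreal (1 / c (a j)) * P (a j) j"
    by blast
  fix F assume F: "finite F" "F \<subseteq> ?bad"
  have "sum L F \<le> (\<Sum>j\<in>F. \<Sum>\<alpha>\<in>a ` F. ennreal (1 / c \<alpha>) * P \<alpha> j)"
  proof (rule sum_mono)
    fix j assume "j \<in> F"
    with F a have "L j \<le> ennreal (1 / c (a j)) * P (a j) j" by blast
    also have "\<dots> \<le> (\<Sum>\<alpha>\<in>a ` F. ennreal (1 / c \<alpha>) * P \<alpha> j)"
      using \<open>j \<in> F\<close> F(1) by (intro member_le_sum) auto
    finally show "L j \<le> (\<Sum>\<alpha>\<in>a ` F. ennreal (1 / c \<alpha>) * P \<alpha> j)" .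
  qed
  also have "\<dots> = (\<Sum>\<alpha>\<in>a ` F. ennreal (1 / c \<alpha>) * (\<Sum>j\<in>F. P \<alpha> j))"
    by (subst sum.swap) (simp add: sum_distrib_left)
  also have "\<dots> \<le> (\<Sum>\<alpha>\<in>a ` F. ennreal (1 / c \<alpha>) * ennreal (M \<alpha>))"
  proof (intro sum_mono mult_left_mono)
    fix \<alpha>
    have "(\<Sum>j\<in>F. P \<alpha> j) \<le> (\<Sum>\<^sub>\<infinity>j\<in>J. P \<alpha> j)"
      using F by (subst nonneg_infsum_complete) (auto intro!: SUP_upper)
    also have "\<dots> \<le> ennreal (M \<alpha>)" by (rule P_sum)
    finally show "(\<Sum>j\<in>F. P \<alpha> j) \<le> ennreal (M \<alpha>)" .
  qed simp
  also have "\<dots> = ennreal (\<Sum>\<alpha>\<in>a ` F. M \<alpha> / c \<alpha>)"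
  proof -
    have "ennreal (1 / c \<alpha>) * ennreal (M \<alpha>) = ennreal (M \<alpha> / c \<alpha>)" for \<alpha>
      using c_pos[of \<alpha>] M_nonneg[of \<alpha>] by (simp flip: ennreal_mult)
    moreover have "M \<alpha> / c \<alpha> \<ge> 0" for \<alpha>
      using c_pos[of \<alpha>] M_nonneg[of \<alpha>] by simp
    ultimately show ?thesis
      by (simp add: sum_ennreal)
  qed
  also have "\<dots> \<le> ennreal E"
    using weights F(1) by (simp add: ennreal_leI)
  finally show "sum L F \<le> ennreal E" .
qed

lemma infsum_le_good_part:
  fixes L :: "'j \<Rightarrow> ennreal" and P :: "'a \<Rightarrow> 'j \<Rightarrow> ennreal" and c M :: "'a \<Rightarrow> real"
  assumes "\<And>\<alpha>. c \<alpha> > 0" "\<And>\<alpha>. M \<alpha> \<ge> 0"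
    and "\<And>\<alpha>. (\<Sum>\<^sub>\<infinity>j\<in>J. P \<alpha> j) \<le> ennreal (M \<alpha>)"
    and "\<And>A. finite A \<Longrightarrow> (\<Sum>\<alpha>\<in>A. M \<alpha> / c \<alpha>) \<le> E"
  shows "(\<Sum>\<^sub>\<infinity>j\<in>J. L j) \<le> (\<Sum>\<^sub>\<infinity>j\<in>{j\<in>J. \<forall>\<alpha>. P \<alpha> j \<le> ennreal (c \<alpha>) * L j}. L j) + ennreal E"
proof -
  let ?good = "{j\<in>J. \<forall>\<alpha>. P \<alpha> j \<le> ennreal (c \<alpha>) * L j}"
  have "J - ?good = {j\<in>J. \<exists>\<alpha>. ennreal (c \<alpha>) * L j < P \<alpha> j}"
    by (auto simp: not_le dest: leD)
  hence bad: "(\<Sum>\<^sub>\<infinity>j\<in>J - ?good. L j) \<le> ennreal E"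
    using infsum_bad_le[OF assms] by simp
  have "(\<Sum>\<^sub>\<infinity>j\<in>J. L j) = (\<Sum>\<^sub>\<infinity>j\<in>?good \<union> (J - ?good). L j)"
    by (intro infsum_cong_neutral) auto
  also have "\<dots> = (\<Sum>\<^sub>\<infinity>j\<in>?good. L j) + (\<Sum>\<^sub>\<infinity>j\<in>J - ?good. L j)"
    by (rule infsum_Un_disjoint) (auto intro: nonneg_summable_on_complete)
  also have "\<dots> \<le> (\<Sum>\<^sub>\<infinity>j\<in>?good. L j) + ennreal E"
    using bad by (rule add_left_mono)
  finally show ?thesis .
qed

lemma borel_measurable_L2sq_integrand:
  fixes g :: "real^'n::finite \<Rightarrow> complex"
  assumes "open G" "continuous_on G g"
  shows "(\<lambda>x. ennreal ((norm (g x))\<^sup>2) * indicator G x) \<in> borel_measurable lborel"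
proof -
  have "(\<lambda>x. indicator G x *\<^sub>R g x) \<in> borel_measurable borel"
    using assms by (intro borel_measurable_continuous_on_indicator) auto
  hence "(\<lambda>x. ennreal ((norm (indicator G x *\<^sub>R g x))\<^sup>2)) \<in> borel_measurable lborel"
    by measurable
  thus ?thesis
    by (rule measurable_cong[THEN iffD1, rotated]) (simp add: indicator_def)
qed

lemma L2sq_cover_bounds:
  fixes g :: "real^'n::finite \<Rightarrow> complex" and Q :: "'j \<Rightarrow> (real^'n) set"
  assumes "countable J" "\<forall>j\<in>J. open (Q j)" "open \<Gamma>" "continuous_on \<Gamma> g"
    and "AE x in lborel. indicator \<Gamma> x \<le> (\<Sum>\<^sub>\<infinity>j\<in>J. (indicator (Q j) x :: ennreal))
                  \<and> (\<Sum>\<^sub>\<infinity>j\<in>J. (indicator (Q j) x :: ennreal)) \<le> ennreal \<kappa> * indicator \<Gamma> x"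
  shows "L2sq \<Gamma> g \<le> (\<Sum>\<^sub>\<infinity>j\<in>J. L2sq (Q j \<inter> \<Gamma>) g)"
    and "(\<Sum>\<^sub>\<infinity>j\<in>J. L2sq (Q j \<inter> \<Gamma>) g) \<le> ennreal \<kappa> * L2sq \<Gamma> g"
  using nn_integral_cover_bounds[OF assms(1) _ borel_measurable_L2sq_integrand[OF assms(3,4)] assms(5)]
    assms(2) unfolding L2sq_def by auto

lemma smooth_on_continuous_on_pderiv_multi:
  "smooth_on G f \<Longrightarrow> continuous_on G (pderiv_multi \<alpha> f)"
  unfolding smooth_on_def
  by (meson continuous_at_imp_continuous_on differentiable_imp_continuous_within)

lemma pderiv_multi_zero [simp]: "pderiv_multi (\<lambda>_. 0) f = f"
  by (simp add: pderiv_multi_def mabs_def)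

definition gevrey_weight :: "real^'n::finite \<Rightarrow> real \<Rightarrow> ('n \<Rightarrow> nat) \<Rightarrow> real" where
  "gevrey_weight B \<mu> \<alpha> = mpow B \<alpha> * fact (mabs \<alpha>) powr \<mu>"

lemma gevrey_weight_pos: "\<forall>i. B $ i > 0 \<Longrightarrow> gevrey_weight B \<mu> \<alpha> > 0"
  unfolding gevrey_weight_def mpow_def by (simp add: prod_pos)

lemma gevrey_weight_scale2: "gevrey_weight (2 *\<^sub>R B) \<mu> \<alpha> = 2 ^ mabs \<alpha> * gevrey_weight B \<mu> \<alpha>"
  unfolding gevrey_weight_def mpow_def mabs_def
  by (simp add: power_mult_distrib prod.distrib power_sum)

lemma sum_quarter_pow_mabs_le:
  fixes A :: "('n::finite \<Rightarrow> nat) set"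
  assumes "finite A"
  shows "(\<Sum>\<alpha>\<in>A. (1/4::real) ^ mabs \<alpha>) \<le> 2 ^ CARD('n)"
proof -
  define N where "N = Max ((\<lambda>(\<alpha>, i). \<alpha> i) ` (A \<times> UNIV))"
  have A_sub: "A \<subseteq> PiE (UNIV::'n set) (\<lambda>_. {..N})"
    unfolding N_def using assms by (auto simp: PiE_def intro!: Max_ge)
  have "(\<Sum>k\<le>N. (1/4::real) ^ k) = (1 - (1/4) ^ Suc N) / (1 - 1/4)"
    using sum_gp_strict[of "1/4::real" "Suc N"] by (simp add: lessThan_Suc_atMost)
  also have "\<dots> \<le> 2" by (simp add: field_simps)
  finally have geometric: "(\<Sum>k\<le>N. (1/4::real) ^ k) \<le> 2" .
  have "(\<Sum>\<alpha>\<in>A. (1/4::real) ^ mabs \<alpha>) \<le> (\<Sum>\<alpha>\<in>PiE (UNIV::'n set) (\<lambda>_. {..N}). \<Prod>i\<in>UNIV. (1/4::real) ^ \<alpha> i)"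
    unfolding mabs_def power_sum using A_sub by (intro sum_mono2) (auto intro: finite_PiE prod_nonneg)
  also have "\<dots> = (\<Prod>i\<in>(UNIV::'n set). \<Sum>k\<le>N. (1/4::real) ^ k)"
    by (rule prod_sum_PiE[symmetric]) auto
  also have "\<dots> \<le> (\<Prod>i\<in>(UNIV::'n set). 2)"
    using geometric by (intro prod_mono) (auto intro: sum_nonneg)
  finally show ?thesis by simp
qed

lemma sum_gevrey_ratio_le:
  fixes A :: "('n::finite \<Rightarrow> nat) set" and B :: "real^'n"
  assumes "finite A" "\<epsilon> > 0" "\<kappa> > 0" "\<forall>i. B $ i > 0"
  shows "(\<Sum>\<alpha>\<in>A. \<kappa> * (D * gevrey_weight B \<mu> \<alpha>)\<^sup>2
                  / ((2 ^ CARD('n) * \<kappa> / \<epsilon>) * (gevrey_weight (2 *\<^sub>R B) \<mu> \<alpha>)\<^sup>2))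
         \<le> \<epsilon> * D\<^sup>2"
proof -
  have ratio: "\<kappa> * (D * gevrey_weight B \<mu> \<alpha>)\<^sup>2 / ((2 ^ CARD('n) * \<kappa> / \<epsilon>) * (gevrey_weight (2 *\<^sub>R B) \<mu> \<alpha>)\<^sup>2)
      = \<epsilon> * D\<^sup>2 / 2 ^ CARD('n) * (1/4) ^ mabs \<alpha>" for \<alpha>
    using gevrey_weight_pos[OF assms(4), of \<mu> \<alpha>] assms(2,3)
    by (simp add: gevrey_weight_scale2 field_simps power2_eq_square flip: power_mult_distrib)
  have "(\<Sum>\<alpha>\<in>A. \<epsilon> * D\<^sup>2 / 2 ^ CARD('n) * (1/4) ^ mabs \<alpha>)
      = \<epsilon> * D\<^sup>2 / 2 ^ CARD('n) * (\<Sum>\<alpha>\<in>A. (1/4) ^ mabs \<alpha>)"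
    by (simp add: sum_distrib_left)
  also have "\<dots> \<le> \<epsilon> * D\<^sup>2 / 2 ^ CARD('n) * 2 ^ CARD('n)"
    using sum_quarter_pow_mabs_le[OF assms(1)] assms(2) by (intro mult_left_mono) auto
  finally show ?thesis unfolding ratio by simp
qed

definition good_cubes ::
    "'j set \<Rightarrow> ('j \<Rightarrow> (real^'n::finite) set) \<Rightarrow> (real^'n) set \<Rightarrow> (real^'n \<Rightarrow> complex) \<Rightarrow> (('n \<Rightarrow> nat) \<Rightarrow> real) \<Rightarrow> 'j set"
  where "good_cubes J Q \<Gamma> f c =
    {j\<in>J. \<forall>\<alpha>. L2sq (Q j \<inter> \<Gamma>) (pderiv_multi \<alpha> f) \<le> ennreal (c \<alpha>) * L2sq (Q j \<inter> \<Gamma>) f}"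

lemma L2sq_le_good_cubes:
  fixes \<Gamma> :: "(real^'n::finite) set" and Q :: "'j \<Rightarrow> (real^'n) set" and B :: "real^'n"
  assumes "open \<Gamma>" "countable J" "\<forall>j\<in>J. open (Q j)" "\<kappa> \<ge> 1"
    and "AE x in lborel. indicator \<Gamma> x \<le> (\<Sum>\<^sub>\<infinity>j\<in>J. (indicator (Q j) x :: ennreal))
                  \<and> (\<Sum>\<^sub>\<infinity>j\<in>J. (indicator (Q j) x :: ennreal)) \<le> ennreal \<kappa> * indicator \<Gamma> x"
    and "smooth_on \<Gamma> f" "\<forall>i. B $ i > 0"
    and derivative_bounds: "\<And>\<alpha>. L2sq \<Gamma> (pderiv_multi \<alpha> f) \<le> ennreal ((D * gevrey_weight B \<mu> \<alpha>)\<^sup>2)"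
    and "\<epsilon> > 0"
  shows "L2sq \<Gamma> f \<le> (\<Sum>\<^sub>\<infinity>j\<in>good_cubes J Q \<Gamma> f (\<lambda>\<alpha>. (2 ^ CARD('n) * \<kappa> / \<epsilon>) * (gevrey_weight (2 *\<^sub>R B) \<mu> \<alpha>)\<^sup>2).
                          L2sq (Q j \<inter> \<Gamma>) f) + ennreal (\<epsilon> * D\<^sup>2)"
proof -
  define M where "M \<alpha> = \<kappa> * (D * gevrey_weight B \<mu> \<alpha>)\<^sup>2" for \<alpha>
  note cover = L2sq_cover_bounds[OF assms(2,3,1) smooth_on_continuous_on_pderiv_multi[OF assms(6)] assms(5)]
  have "L2sq \<Gamma> f \<le> (\<Sum>\<^sub>\<infinity>j\<in>J. L2sq (Q j \<inter> \<Gamma>) f)"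
    using cover(1)[of "\<lambda>_. 0"] by simp
  also have "\<dots> \<le> (\<Sum>\<^sub>\<infinity>j\<in>good_cubes J Q \<Gamma> f (\<lambda>\<alpha>. (2 ^ CARD('n) * \<kappa> / \<epsilon>) * (gevrey_weight (2 *\<^sub>R B) \<mu> \<alpha>)\<^sup>2).
                          L2sq (Q j \<inter> \<Gamma>) f) + ennreal (\<epsilon> * D\<^sup>2)"
    unfolding good_cubes_def
  proof (rule infsum_le_good_part)
    show "(\<Sum>\<^sub>\<infinity>j\<in>J. L2sq (Q j \<inter> \<Gamma>) (pderiv_multi \<alpha> f)) \<le> ennreal (M \<alpha>)" for \<alpha>
    proof -
      have "(\<Sum>\<^sub>\<infinity>j\<in>J. L2sq (Q j \<inter> \<Gamma>) (pderiv_multi \<alpha> f)) \<le> ennreal \<kappa> * L2sq \<Gamma> (pderiv_multi \<alpha> f)"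
        by (rule cover(2))
      also have "\<dots> \<le> ennreal \<kappa> * ennreal ((D * gevrey_weight B \<mu> \<alpha>)\<^sup>2)"
        using derivative_bounds by (rule mult_left_mono) simp
      finally show ?thesis
        using assms(4) by (simp add: M_def ennreal_mult)
    qed
    show "M \<alpha> \<ge> 0" for \<alpha>
      using assms(4) by (simp add: M_def)
    have "(gevrey_weight (2 *\<^sub>R B) \<mu> \<alpha>)\<^sup>2 > 0" for \<alpha>
      using assms(7) by (intro zero_less_power gevrey_weight_pos) simp
    with \<open>\<epsilon> > 0\<close> assms(4) show "(2 ^ CARD('n) * \<kappa> / \<epsilon>) * (gevrey_weight (2 *\<^sub>R B) \<mu> \<alpha>)\<^sup>2 > 0" for \<alpha>
      by (intro mult_pos_pos divide_pos_pos) simp_all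
    show "(\<Sum>\<alpha>\<in>A. M \<alpha> / ((2 ^ CARD('n) * \<kappa> / \<epsilon>) * (gevrey_weight (2 *\<^sub>R B) \<mu> \<alpha>)\<^sup>2)) \<le> \<epsilon> * D\<^sup>2"
      if "finite A" for A
      unfolding M_def using assms(4) by (intro sum_gevrey_ratio_le[OF that \<open>\<epsilon> > 0\<close> _ assms(7)]) simp
  qed
  finally show ?thesis .
qed

theorem lemma3p4:
  fixes \<Gamma> :: "(real^'n) set" and Q :: "'j \<Rightarrow> (real^'n) set" and J :: "'j set"
    and f :: "real^'n \<Rightarrow> complex" and \<kappa> D \<mu> :: real and B :: "real^'n"
  assumes "open \<Gamma>"
    and "countable J"
    and "\<forall>j\<in>J. open (Q j)"
    and "\<kappa> \<ge> 1"
    and "AE x in lborel. indicator \<Gamma> x \<le> (\<Sum>\<^sub>\<infinity>j\<in>J. (indicator (Q j) x :: ennreal))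
                        \<and> (\<Sum>\<^sub>\<infinity>j\<in>J. (indicator (Q j) x :: ennreal)) \<le> ennreal \<kappa> * indicator \<Gamma> x"
    and "smooth_on \<Gamma> f"
    and "D > 0" and "\<forall>i. B $ i > 0" and "0 \<le> \<mu>" and "\<mu> \<le> 1"
    and "\<forall>\<alpha>. L2sq \<Gamma> (pderiv_multi \<alpha> f)
               \<le> ennreal ((D * mpow B \<alpha> * fact (mabs \<alpha>) powr \<mu>)\<^sup>2)"
  shows "\<forall>\<epsilon>>0. \<exists>Jgd \<subseteq> J.
           L2sq \<Gamma> f \<le> (\<Sum>\<^sub>\<infinity>j\<in>Jgd. L2sq (Q j \<inter> \<Gamma>) f) + ennreal (\<epsilon> * D\<^sup>2)
         \<and> (\<forall>j\<in>Jgd. \<forall>\<alpha>. L2sq (Q j \<inter> \<Gamma>) (pderiv_multi \<alpha> f)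
               \<le> ennreal ((2 ^ CARD('n) * \<kappa> / \<epsilon>) * (mpow (2 *\<^sub>R B) \<alpha> * fact (mabs \<alpha>) powr \<mu>)\<^sup>2)
                 * L2sq (Q j \<inter> \<Gamma>) f)"
proof (intro allI impI)
  fix \<epsilon> :: real assume "\<epsilon> > 0"
  define c where "c \<alpha> = (2 ^ CARD('n) * \<kappa> / \<epsilon>) * (gevrey_weight (2 *\<^sub>R B) \<mu> \<alpha>)\<^sup>2" for \<alpha>
  have "\<And>\<alpha>. L2sq \<Gamma> (pderiv_multi \<alpha> f) \<le> ennreal ((D * gevrey_weight B \<mu> \<alpha>)\<^sup>2)"
    using assms(11) by (simp add: gevrey_weight_def mult.assoc)
  from L2sq_le_good_cubes[OF assms(1-6,8) this \<open>\<epsilon> > 0\<close>, folded c_def]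
  show "\<exists>Jgd \<subseteq> J.
           L2sq \<Gamma> f \<le> (\<Sum>\<^sub>\<infinity>j\<in>Jgd. L2sq (Q j \<inter> \<Gamma>) f) + ennreal (\<epsilon> * D\<^sup>2)
         \<and> (\<forall>j\<in>Jgd. \<forall>\<alpha>. L2sq (Q j \<inter> \<Gamma>) (pderiv_multi \<alpha> f)
               \<le> ennreal ((2 ^ CARD('n) * \<kappa> / \<epsilon>) * (mpow (2 *\<^sub>R B) \<alpha> * fact (mabs \<alpha>) powr \<mu>)\<^sup>2)
                 * L2sq (Q j \<inter> \<Gamma>) f)"
    by (intro exI[of _ "good_cubes J Q \<Gamma> f c"]) (auto simp: good_cubes_def c_def gevrey_weight_def)
qed

end
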